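(* Let $n>k\ge1$ be coprime integers, $\eta$ in the upper half-plane, $\Lambda=\mathbb{Z}+\mathbb{Z}\eta$, $E=\mathbb{C}/\Lambda$. For all $\tau\in\mathbb{C}$, there is an isomorphism of graded algebras $Q_{n,k}(E,\tau)^!\cong S_{n,n-k}(E,\tau)$.
   Context: Write $e(z)=e^{2\pi i z}$ and $\theta(z)=\sum_{m\in\mathbb{Z}}(-1)^m e\big(mz+\tfrac12 m(m-1)\eta\big)$. For $\alpha\in\mathbb{Z}$ put $\theta_\alpha(z)=e\big(\alpha z+\tfrac{\alpha}{2n}+\tfrac{\alpha(\alpha-n)}{2n}\eta\big)\prod_{m=0}^{n-1}\theta\big(z+\tfrac mn+\tfrac{\alpha}{n}\eta\big)$, regarded as indexed by $\alpha\in\mathbb{Z}_n$. Let $V$ be an $n$-dimensional complex vector space with basis $x_i$, $i\in\mathbb{Z}_n$, and $TV$ its tensor algebra with $V$ in degree one. For integers $1\le k'<n$ coprime to $n$, $\tau\in\mathbb{C}\setminus\frac1n\Lambda$ and $z\in\mathbb{C}$, define $R_{n,k',\tau}(z)\in\mathrm{End}(V\otimes V)$ by $$R_{n,k',\tau}(z)(x_i\otimes x_j)=\frac{\theta_0(-z)\cdots\theta_{n-1}(-z)}{\theta_1(0)\cdots\theta_{n-1}(0)}\sum_{r\in\mathbb{Z}_n}\frac{\theta_{j-i+r(k'-1)}(-z+\tau)}{\theta_{j-i-r}(-z)\,\theta_{k'r}(\tau)}\,x_{j-r}\otimes x_{i+r}.$$ For $\tau\notin\frac1n\Lambda$ define $Q_{n,k'}(E,\tau):=TV/(\operatorname{im}R_{n,k',\tau}(\tau))$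 and $S_{n,k'}(E,\tau):=TV/(\ker R_{n,k',\tau}(\tau))$; for $\tau\in\frac1n\Lambda$, $R_{n,k',\tau}(\tau)$ is replaced in both definitions by the limit $\lim_{t\to0}R_{n,k',t}(t+\tau)$. For $A=TV/(W)$ with $W\subseteq V\otimes V$, the quadratic dual is $A^!=TV^*/(W^\perp)$, $W^\perp\subseteq V^*\otimes V^*=(V\otimes V)^*$ the annihilator of $W$. *)

theory Defs
  imports "HOL-Analysis.Analysis"
begin

definition ee :: "complex \<Rightarrow> complex" where
  "ee z = exp (2 * of_real pi * \<i> * z)"

definition theta :: "complex \<Rightarrow> complex \<Rightarrow> complex" where
  "theta \<eta> z = (\<Sum>\<^sub>\<infinity> m::int. (if even m then 1 else -1) *
       ee (of_int m * z + of_int (m * (m - 1)) / 2 * \<eta>))"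

definition theta_idx :: "nat \<Rightarrow> complex \<Rightarrow> int \<Rightarrow> complex \<Rightarrow> complex" where
  "theta_idx n \<eta> \<alpha> z =
     ee (of_int \<alpha> * z + of_int \<alpha> / (2 * of_nat n)
         + of_int (\<alpha> * (\<alpha> - int n)) / (2 * of_nat n) * \<eta>)
     * (\<Prod>m<n. theta \<eta> (z + of_nat m / of_nat n + of_int \<alpha> / of_nat n * \<eta>))"

text \<open>theta indexed by Z_n: we use the representative in {0..n-1}.\<close>
definition thetaZ :: "nat \<Rightarrow> complex \<Rightarrow> int \<Rightarrow> complex \<Rightarrow> complex" where
  "thetaZ n \<eta> \<alpha> z = theta_idx n \<eta> (\<alpha> mod int n) z"

text \<open>Matrix entry: coefficient of x_p \<otimes> x_q in R_{n,k',tau}(z)(x_i \<otimes> x_j),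
  all indices in {0..n-1}. The summand with index r contributes to
  x_{j-r} \<otimes> x_{i+r}, so r = j - p and we need p + q = i + j mod n.\<close>
definition R_entry :: "nat \<Rightarrow> nat \<Rightarrow> complex \<Rightarrow> complex \<Rightarrow> complex
    \<Rightarrow> nat \<Rightarrow> nat \<Rightarrow> nat \<Rightarrow> nat \<Rightarrow> complex" where
  "R_entry n k' \<eta> \<tau> z p q i j =
     (if (int p + int q) mod int n = (int i + int j) mod int n then
        (let r = (int j - int p) mod int n in
          ((\<Prod>a<n. thetaZ n \<eta> (int a) (- z)) / (\<Prod>a\<in>{1..<n}. thetaZ n \<eta> (int a) 0))
          * (thetaZ n \<eta> (int j - int i + r * (int k' - 1)) (- z + \<tau>)
             / (thetaZ n \<eta> (int j - int i - r) (- z) * thetaZ n \<eta> (int k' * r) \<tau>)))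
      else 0)"

definition frac_lattice :: "nat \<Rightarrow> complex \<Rightarrow> complex set" where
  "frac_lattice n \<eta> = {(of_int a + of_int b * \<eta>) / of_nat n | a b. True}"

definition R_op :: "nat \<Rightarrow> nat \<Rightarrow> complex \<Rightarrow> complex \<Rightarrow> nat \<Rightarrow> nat \<Rightarrow> nat \<Rightarrow> nat \<Rightarrow> complex" where
  "R_op n k' \<eta> \<tau> p q i j =
     (if \<tau> \<in> frac_lattice n \<eta>
      then Lim (at 0) (\<lambda>t. R_entry n k' \<eta> t (t + \<tau>) p q i j)
      else R_entry n k' \<eta> \<tau> \<tau> p q i j)"

text \<open>An element of V^{\<otimes>d} (V with basis x_0..x_{n-1}) is a function on words:
  its coefficient on x_{w_1} \<otimes> ... \<otimes> x_{w_d}.\<close>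
definition tens :: "nat \<Rightarrow> nat \<Rightarrow> (nat list \<Rightarrow> complex) set" where
  "tens n d = {f. \<forall>w. f w \<noteq> 0 \<longrightarrow> length w = d \<and> set w \<subseteq> {..<n}}"

definition tprod :: "nat \<Rightarrow> (nat list \<Rightarrow> complex) \<Rightarrow> (nat list \<Rightarrow> complex) \<Rightarrow> nat list \<Rightarrow> complex" where
  "tprod a f g w = f (take a w) * g (drop a w)"

definition tunit :: "nat list \<Rightarrow> complex" where
  "tunit w = (if w = [] then 1 else 0)"

definition cspan :: "(nat list \<Rightarrow> complex) set \<Rightarrow> (nat list \<Rightarrow> complex) set" where
  "cspan S = {x. \<exists>F c. finite F \<and> F \<subseteq> S \<and> x = (\<lambda>w. \<Sum>v\<in>F. c v * v w)}"

text \<open>Degree-d component of the two-sided ideal (W) of TV, for W \<subseteq> V \<otimes> V.\<close>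
definition ideal_comp :: "nat \<Rightarrow> (nat list \<Rightarrow> complex) set \<Rightarrow> nat \<Rightarrow> (nat list \<Rightarrow> complex) set" where
  "ideal_comp n W d = cspan {tprod (a + 2) (tprod a u x) v | a b u x v.
      a + 2 + b = d \<and> u \<in> tens n a \<and> x \<in> W \<and> v \<in> tens n b}"

text \<open>Isomorphism of graded algebras TV/(W) \<cong> TU/(W') (V, U both with basis indexed by
  {0..n-1}): a family of linear maps F_d on the degree-d components V^{\<otimes>d} \<rightarrow> U^{\<otimes>d}
  which descend to bijections (V^{\<otimes>d}/I_d) \<rightarrow> (U^{\<otimes>d}/I'_d), compatible with
  multiplication and unit.\<close>
definition graded_alg_iso :: "nat \<Rightarrow> (nat list \<Rightarrow> complex) set \<Rightarrow> (nat list \<Rightarrow> complex) set \<Rightarrow> bool" where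
  "graded_alg_iso n W W' \<longleftrightarrow>
    (\<exists>F :: nat \<Rightarrow> (nat list \<Rightarrow> complex) \<Rightarrow> (nat list \<Rightarrow> complex).
       (\<forall>d. \<forall>x\<in>tens n d. F d x \<in> tens n d) \<and>
       (\<forall>d. \<forall>x\<in>tens n d. \<forall>y\<in>tens n d. \<forall>c a. F d (\<lambda>w. c * x w + a * y w) = (\<lambda>w. c * F d x w + a * F d y w)) \<and>
       (\<forall>d. \<forall>x\<in>tens n d. F d x \<in> ideal_comp n W' d \<longleftrightarrow> x \<in> ideal_comp n W d) \<and>
       (\<forall>d. \<forall>y\<in>tens n d. \<exists>x\<in>tens n d. (\<lambda>w. y w - F d x w) \<in> ideal_comp n W' d) \<and>
       (\<forall>a b. \<forall>x\<in>tens n a. \<forall>y\<in>tens n b.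
          (\<lambda>w. F (a + b) (tprod a x y) w - tprod a (F a x) (F b y) w) \<in> ideal_comp n W' (a + b)) \<and>
       (\<lambda>w. F 0 tunit w - tunit w) \<in> ideal_comp n W' 0)"

definition R_image :: "nat \<Rightarrow> nat \<Rightarrow> complex \<Rightarrow> complex \<Rightarrow> (nat list \<Rightarrow> complex) set" where
  "R_image n k' \<eta> \<tau> = {f \<in> tens n 2. \<exists>c :: nat \<Rightarrow> nat \<Rightarrow> complex.
      \<forall>p<n. \<forall>q<n. f [p, q] = (\<Sum>i<n. \<Sum>j<n. R_op n k' \<eta> \<tau> p q i j * c i j)}"

definition R_kernel :: "nat \<Rightarrow> nat \<Rightarrow> complex \<Rightarrow> complex \<Rightarrow> (nat list \<Rightarrow> complex) set" where
  "R_kernel n k' \<eta> \<tau> = {f \<in> tens n 2.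
      \<forall>p<n. \<forall>q<n. (\<Sum>i<n. \<Sum>j<n. R_op n k' \<eta> \<tau> p q i j * f [i, j]) = 0}"

text \<open>Annihilator W^\<perp> \<subseteq> V^* \<otimes> V^* = (V \<otimes> V)^*, in the dual bases,
  with (f \<otimes> g)(v \<otimes> w) = f(v) g(w).\<close>
definition perp :: "nat \<Rightarrow> (nat list \<Rightarrow> complex) set \<Rightarrow> (nat list \<Rightarrow> complex) set" where
  "perp n W = {\<xi> \<in> tens n 2. \<forall>f\<in>W. (\<Sum>i<n. \<Sum>j<n. \<xi> [i, j] * f [i, j]) = 0}"

text \<open>Q_{n,k'}(E,tau) = TV/(im R), S_{n,k'}(E,tau) = TV/(ker R); the quadratic dual of
  Q is TV^*/((im R)^\<perp>).\<close>

end

theory Submission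
  imports Defs
begin

(* Write -i for the negative of i in Z_n.  The coefficient of x_p (x) x_q in
   R_{n,n-k}(tau)(x_i (x) x_j) equals the coefficient of x_{-i} (x) x_{-j} in
   R_{n,k}(tau)(x_{-p} (x) x_{-q}):
   theta_alpha depends only on alpha mod n, and under this substitution the summation index r
   becomes -r, after which the three theta indices agree mod n.  The identity holds for all
   (t, z), so it survives the limit taken when tau lies in (1/n) Lambda.  Consequently a
   functional xi kills im R_{n,k}(tau) iff its image under the relabelling x_i |-> x_{-i} lies in
   ker R_{n,n-k}(tau).  The relabelling is an involutive automorphism of the tensor algebra, so it
   carries the ideal generated by (im R_{n,k})^perp onto the one generated by ker R_{n,n-k} and
   induces the isomorphism. *)

(* Extended by the identity beyond n, so that it is an involution of all of nat and relabelling
   by it is an involution on all words. *)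
definition zn_neg :: "nat \<Rightarrow> nat \<Rightarrow> nat" where
  "zn_neg n i = (if 0 < i \<and> i < n then n - i else i)"

lemma zn_neg_zn_neg [simp]: "zn_neg n (zn_neg n i) = i"
  unfolding zn_neg_def by auto

lemma zn_neg_less_iff [simp]: "zn_neg n i < n \<longleftrightarrow> i < n"
  unfolding zn_neg_def by auto

lemma dvd_zn_neg_add: "i < n \<Longrightarrow> int n dvd int (zn_neg n i) + int i"
  unfolding zn_neg_def by (auto simp: of_nat_diff)

lemma bij_betw_zn_neg: "bij_betw (zn_neg n) {..<n} {..<n}"
  by (rule bij_betw_byWitness[where f' = "zn_neg n"]) auto

lemma thetaZ_cong: "int n dvd a - b \<Longrightarrow> thetaZ n \<eta> a z = thetaZ n \<eta> b z"
  unfolding thetaZ_def by (simp flip: mod_eq_dvd_iff)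

(* The primed indices are those of the transposed entry: P' = -I, I' = -P, J' = -Q, K' = -K mod N;
   r and r' are the summation indices of the two entries, and r' = -r mod N. *)
lemma neg_transpose_index_congs:
  fixes N :: int
  assumes "N dvd P + Q - (I + J)"
    and "N dvd P' + I" "N dvd I' + P" "N dvd J' + Q" "N dvd K' + K"
    and "N dvd r - (J - P)" "N dvd r' - (J' - P')"
  shows "N dvd (J - I + r * (K' - 1)) - (J' - I' + r' * (K - 1))"
    and "N dvd (J - I - r) - (J' - I' - r')"
    and "N dvd K' * r - K * r'"
  using assms by algebra+

lemma R_entry_neg_transpose:
  assumes "k < n" "p < n" "q < n" "i < n" "j < n"
  shows "R_entry n (n - k) \<eta> t z p q i j
       = R_entry n k \<eta> t z (zn_neg n i) (zn_neg n j) (zn_neg n p) (zn_neg n q)"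
proof -
  let ?P = "int p" and ?Q = "int q" and ?I = "int i" and ?J = "int j" and ?N = "int n"
  let ?P' = "int (zn_neg n i)" and ?Q' = "int (zn_neg n j)"
  let ?I' = "int (zn_neg n p)" and ?J' = "int (zn_neg n q)"
  have negs: "?N dvd ?P' + ?I" "?N dvd ?Q' + ?J" "?N dvd ?I' + ?P" "?N dvd ?J' + ?Q"
    using assms by (simp_all add: dvd_zn_neg_add)
  have "?N dvd (?P + ?Q - (?I + ?J)) - (?P' + ?Q' - (?I' + ?J'))"
    using negs by algebra
  then have support: "(?P' + ?Q') mod ?N = (?I' + ?J') mod ?N \<longleftrightarrow> (?P + ?Q) mod ?N = (?I + ?J) mod ?N"
    unfolding mod_eq_dvd_iff by (metis dvd_add_right_iff diff_add_cancel)
  show ?thesis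
  proof (cases "(?P + ?Q) mod ?N = (?I + ?J) mod ?N")
    case False
    with support show ?thesis
      unfolding R_entry_def by simp
  next
    case True
    let ?r = "(?J - ?P) mod ?N" and ?r' = "(?J' - ?P') mod ?N"
    have sum: "?N dvd ?P + ?Q - (?I + ?J)"
      using True by (simp add: mod_eq_dvd_iff)
    have k: "?N dvd int (n - k) + int k"
      using assms(1) by simp
    have r: "?N dvd ?r - (?J - ?P)" "?N dvd ?r' - (?J' - ?P')"
      by (simp_all flip: mod_eq_dvd_iff)
    note congs = neg_transpose_index_congs[OF sum negs(1,3,4) k r]
    show ?thesis
      using True support thetaZ_cong[OF congs(1)] thetaZ_cong[OF congs(2)] thetaZ_cong[OF congs(3)]
      unfolding R_entry_def Let_def by simp
  qed
qed

lemma R_op_neg_transpose: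
  assumes "k < n" "p < n" "q < n" "i < n" "j < n"
  shows "R_op n (n - k) \<eta> \<tau> p q i j
       = R_op n k \<eta> \<tau> (zn_neg n i) (zn_neg n j) (zn_neg n p) (zn_neg n q)"
  unfolding R_op_def using R_entry_neg_transpose[OF assms] by simp

definition relabel :: "(nat \<Rightarrow> nat) \<Rightarrow> (nat list \<Rightarrow> complex) \<Rightarrow> nat list \<Rightarrow> complex" where
  "relabel \<sigma> x = (\<lambda>w. x (map \<sigma> w))"

lemma relabel_relabel: "(\<And>i. \<sigma> (\<sigma> i) = i) \<Longrightarrow> relabel \<sigma> (relabel \<sigma> x) = x"
  unfolding relabel_def by (simp add: map_idI)

lemma relabel_tens:
  assumes "\<And>i. \<sigma> i < n \<Longrightarrow> i < n" and "x \<in> tens n d"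
  shows "relabel \<sigma> x \<in> tens n d"
  using assms unfolding tens_def relabel_def by fastforce

lemma relabel_tprod: "relabel \<sigma> (tprod a x y) = tprod a (relabel \<sigma> x) (relabel \<sigma> y)"
  unfolding relabel_def tprod_def by (simp add: take_map drop_map)

lemma relabel_tunit: "relabel \<sigma> tunit = tunit"
  unfolding relabel_def tunit_def by simp

lemma relabel_cspan:
  assumes "relabel \<sigma> ` S \<subseteq> T" and "x \<in> cspan S"
  shows "relabel \<sigma> x \<in> cspan T"
proof -
  obtain F c where F: "finite F" "F \<subseteq> S" and x: "x = (\<lambda>w. \<Sum>v\<in>F. c v * v w)"
    using assms(2) unfolding cspan_def by blast
  define c' where "c' u = (\<Sum>v\<in>{v\<in>F. relabel \<sigma> v = u}. c v)" for u
  have "relabel \<sigma> x = (\<lambda>w. \<Sum>v\<in>F. c v * relabel \<sigma> v w)"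
    unfolding x relabel_def ..
  also have "\<dots> = (\<lambda>w. \<Sum>u\<in>relabel \<sigma> ` F. c' u * u w)"
    unfolding sum.image_gen[OF F(1), of _ "relabel \<sigma>"] c'_def sum_distrib_right
    by (intro ext sum.cong refl) auto
  finally have "relabel \<sigma> x = (\<lambda>w. \<Sum>u\<in>relabel \<sigma> ` F. c' u * u w)" .
  moreover have "finite (relabel \<sigma> ` F)" "relabel \<sigma> ` F \<subseteq> T"
    using F assms(1) by auto
  ultimately show ?thesis
    unfolding cspan_def by blast
qed

lemma relabel_ideal_comp:
  assumes "\<And>i. \<sigma> i < n \<Longrightarrow> i < n" and "relabel \<sigma> ` W \<subseteq> W'"
    and "x \<in> ideal_comp n W d"
  shows "relabel \<sigma> x \<in> ideal_comp n W' d"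
proof -
  let ?gens = "\<lambda>W. {tprod (a + 2) (tprod a u y) v | a b u y v.
      a + 2 + b = d \<and> u \<in> tens n a \<and> y \<in> W \<and> v \<in> tens n b}"
  have "relabel \<sigma> (tprod (a + 2) (tprod a u y) v) \<in> ?gens W'"
    if "a + 2 + b = d" "u \<in> tens n a" "y \<in> W" "v \<in> tens n b" for a b u y v
    using that assms(1,2) relabel_tens[of \<sigma> n] unfolding relabel_tprod by blast
  then have "relabel \<sigma> ` ?gens W \<subseteq> ?gens W'"
    by blast
  then show ?thesis
    using assms(3) unfolding ideal_comp_def by (rule relabel_cspan)
qed

lemma zero_mem_ideal_comp: "(\<lambda>w. 0) \<in> ideal_comp n W d"
  unfolding ideal_comp_def cspan_def by (intro CollectI exI[of _ "{}"]) auto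

lemma graded_alg_iso_relabel:
  assumes inv: "\<And>i. \<sigma> (\<sigma> i) = i" and range: "\<And>i. i < n \<Longrightarrow> \<sigma> i < n"
    and W_W': "relabel \<sigma> ` W \<subseteq> W'" and W'_W: "relabel \<sigma> ` W' \<subseteq> W"
  shows "graded_alg_iso n W W'"
proof -
  have bound: "\<sigma> i < n \<Longrightarrow> i < n" for i
    using range[of "\<sigma> i"] inv[of i] by simp
  have tens: "x \<in> tens n d \<Longrightarrow> relabel \<sigma> x \<in> tens n d" for x d
    using relabel_tens bound by blast
  show ?thesis
    unfolding graded_alg_iso_def
  proof (intro exI[of _ "\<lambda>_. relabel \<sigma>"] conjI allI ballI)
    fix d
    show "relabel \<sigma> (\<lambda>w. c * x w + a * y w) = (\<lambda>w. c * relabel \<sigma> x w + a * relabel \<sigma> y w)"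
      for x y c a
      by (simp add: relabel_def)
    show "relabel \<sigma> x \<in> ideal_comp n W' d \<longleftrightarrow> x \<in> ideal_comp n W d" for x
      using relabel_ideal_comp[OF bound W_W'] relabel_ideal_comp[OF bound W'_W]
        relabel_relabel[OF inv] by metis
    show "\<exists>x\<in>tens n d. (\<lambda>w. y w - relabel \<sigma> x w) \<in> ideal_comp n W' d" if "y \<in> tens n d" for y
    proof
      show "(\<lambda>w. y w - relabel \<sigma> (relabel \<sigma> y) w) \<in> ideal_comp n W' d"
        using zero_mem_ideal_comp by (simp add: relabel_relabel[OF inv])
    qed (rule tens[OF that])
  qed (simp_all add: tens relabel_tprod relabel_tunit zero_mem_ideal_comp)
qed

lemma sum_swap_double:
  "(\<Sum>p\<in>A. \<Sum>q\<in>B. \<Sum>i\<in>C. \<Sum>j\<in>D. g p q i j)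
   = (\<Sum>i\<in>C. \<Sum>j\<in>D. \<Sum>p\<in>A. \<Sum>q\<in>B. g p q i j)"
proof -
  have "(\<Sum>p\<in>A. \<Sum>q\<in>B. \<Sum>i\<in>C. \<Sum>j\<in>D. g p q i j)
      = (\<Sum>p\<in>A. \<Sum>i\<in>C. \<Sum>q\<in>B. \<Sum>j\<in>D. g p q i j)"
    by (rule sum.cong[OF refl], rule sum.swap)
  also have "\<dots> = (\<Sum>i\<in>C. \<Sum>p\<in>A. \<Sum>q\<in>B. \<Sum>j\<in>D. g p q i j)"
    by (rule sum.swap)
  also have "\<dots> = (\<Sum>i\<in>C. \<Sum>p\<in>A. \<Sum>j\<in>D. \<Sum>q\<in>B. g p q i j)"
    by (rule sum.cong[OF refl], rule sum.cong[OF refl], rule sum.swap)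
  also have "\<dots> = (\<Sum>i\<in>C. \<Sum>j\<in>D. \<Sum>p\<in>A. \<Sum>q\<in>B. g p q i j)"
    by (rule sum.cong[OF refl], rule sum.swap)
  finally show ?thesis .
qed

lemma perp_R_image_iff:
  "\<xi> \<in> perp n (R_image n k \<eta> \<tau>) \<longleftrightarrow> \<xi> \<in> tens n 2 \<and>
     (\<forall>a<n. \<forall>b<n. (\<Sum>p<n. \<Sum>q<n. \<xi> [p, q] * R_op n k \<eta> \<tau> p q a b) = 0)"
  (is "_ \<longleftrightarrow> _ \<and> ?left_null")
proof safe
  assume perp: "\<xi> \<in> perp n (R_image n k \<eta> \<tau>)"
  then show "\<xi> \<in> tens n 2"
    unfolding perp_def by blast
  fix a b assume "a < n" "b < n"
  define col where "col w = (if length w = 2 \<and> set w \<subseteq> {..<n}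
      then R_op n k \<eta> \<tau> (w ! 0) (w ! 1) a b else 0)" for w
  have "col \<in> tens n 2"
    unfolding tens_def col_def by auto
  moreover have "col [p, q] = (\<Sum>i<n. \<Sum>j<n. R_op n k \<eta> \<tau> p q i j * (of_bool (i = a) * of_bool (j = b)))"
    if "p < n" "q < n" for p q
  proof -
    have "(\<Sum>i<n. \<Sum>j<n. R_op n k \<eta> \<tau> p q i j * (of_bool (i = a) * of_bool (j = b))) = R_op n k \<eta> \<tau> p q a b"
      using \<open>a < n\<close> \<open>b < n\<close> by (simp add: mult.assoc[symmetric] sum_distrib_right[symmetric])
    with that show ?thesis
      by (simp add: col_def)
  qed
  ultimately have "col \<in> R_image n k \<eta> \<tau>"
    unfolding R_image_def
    by (intro CollectI conjI exI[where x = "\<lambda>i j. of_bool (i = a) * of_bool (j = b)"]) auto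
  with perp have "(\<Sum>p<n. \<Sum>q<n. \<xi> [p, q] * col [p, q]) = 0"
    unfolding perp_def by blast
  then show "(\<Sum>p<n. \<Sum>q<n. \<xi> [p, q] * R_op n k \<eta> \<tau> p q a b) = 0"
    by (simp add: col_def)
next
  assume "\<xi> \<in> tens n 2" and null: ?left_null
  have "(\<Sum>p<n. \<Sum>q<n. \<xi> [p, q] * f [p, q]) = 0" if f: "f \<in> R_image n k \<eta> \<tau>" for f
  proof -
    obtain c where c: "\<And>p q. p < n \<Longrightarrow> q < n \<Longrightarrow>
        f [p, q] = (\<Sum>i<n. \<Sum>j<n. R_op n k \<eta> \<tau> p q i j * c i j)"
      using f unfolding R_image_def by blast
    have "(\<Sum>p<n. \<Sum>q<n. \<xi> [p, q] * f [p, q])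
        = (\<Sum>p<n. \<Sum>q<n. \<Sum>i<n. \<Sum>j<n. \<xi> [p, q] * R_op n k \<eta> \<tau> p q i j * c i j)"
      by (simp add: c sum_distrib_left mult.assoc)
    also have "\<dots> = (\<Sum>i<n. \<Sum>j<n. \<Sum>p<n. \<Sum>q<n. \<xi> [p, q] * R_op n k \<eta> \<tau> p q i j * c i j)"
      by (rule sum_swap_double)
    also have "\<dots> = (\<Sum>i<n. \<Sum>j<n. (\<Sum>p<n. \<Sum>q<n. \<xi> [p, q] * R_op n k \<eta> \<tau> p q i j) * c i j)"
      by (simp add: sum_distrib_right)
    also have "\<dots> = 0"
      using null by simp
    finally show ?thesis .
  qed
  with \<open>\<xi> \<in> tens n 2\<close> show "\<xi> \<in> perp n (R_image n k \<eta> \<tau>)"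
    unfolding perp_def by blast
qed

lemma all_zn_neg_iff: "(\<forall>i<n. \<forall>j<n. P (zn_neg n i) (zn_neg n j)) \<longleftrightarrow> (\<forall>i<n. \<forall>j<n. P i j)"
  by (metis zn_neg_less_iff zn_neg_zn_neg)

lemma relabel_zn_neg_mem_tens_iff: "relabel (zn_neg n) x \<in> tens n d \<longleftrightarrow> x \<in> tens n d"
proof
  show "relabel (zn_neg n) x \<in> tens n d" if "x \<in> tens n d"
    using relabel_tens[of "zn_neg n" n x d] that by simp
  show "x \<in> tens n d" if "relabel (zn_neg n) x \<in> tens n d"
    using relabel_tens[of "zn_neg n" n "relabel (zn_neg n) x" d] that by (simp add: relabel_relabel)
qed

lemma relabel_zn_neg_mem_R_kernel_iff:
  assumes "k < n"
  shows "relabel (zn_neg n) \<xi> \<in> R_kernel n (n - k) \<eta> \<tau> \<longleftrightarrow> \<xi> \<in> perp n (R_image n k \<eta> \<tau>)"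
proof -
  let ?R = "R_op n k \<eta> \<tau>"
  have row: "(\<Sum>i<n. \<Sum>j<n. R_op n (n - k) \<eta> \<tau> p q i j * relabel (zn_neg n) \<xi> [i, j])
      = (\<Sum>a<n. \<Sum>b<n. \<xi> [a, b] * ?R a b (zn_neg n p) (zn_neg n q))"
    if "p < n" "q < n" for p q
  proof -
    have "(\<Sum>i<n. \<Sum>j<n. R_op n (n - k) \<eta> \<tau> p q i j * relabel (zn_neg n) \<xi> [i, j])
      = (\<Sum>i<n. \<Sum>j<n. \<xi> [zn_neg n i, zn_neg n j] * ?R (zn_neg n i) (zn_neg n j) (zn_neg n p) (zn_neg n q))"
      using R_op_neg_transpose[OF assms that] by (simp add: relabel_def mult.commute)
    also have "\<dots> = (\<Sum>i<n. \<Sum>b<n. \<xi> [zn_neg n i, b] * ?R (zn_neg n i) b (zn_neg n p) (zn_neg n q))"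
      by (intro sum.cong refl sum.reindex_bij_betw bij_betw_zn_neg)
    also have "\<dots> = (\<Sum>a<n. \<Sum>b<n. \<xi> [a, b] * ?R a b (zn_neg n p) (zn_neg n q))"
      by (rule sum.reindex_bij_betw[OF bij_betw_zn_neg])
    finally show ?thesis .
  qed
  have "relabel (zn_neg n) \<xi> \<in> R_kernel n (n - k) \<eta> \<tau> \<longleftrightarrow> \<xi> \<in> tens n 2 \<and>
      (\<forall>p<n. \<forall>q<n. (\<Sum>a<n. \<Sum>b<n. \<xi> [a, b] * ?R a b (zn_neg n p) (zn_neg n q)) = 0)"
    unfolding R_kernel_def using row by (simp add: relabel_zn_neg_mem_tens_iff)
  also have "\<dots> \<longleftrightarrow> \<xi> \<in> tens n 2 \<and> (\<forall>a<n. \<forall>b<n. (\<Sum>p<n. \<Sum>q<n. \<xi> [p, q] * ?R p q a b) = 0)"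
    using all_zn_neg_iff[of n "\<lambda>a b. (\<Sum>p<n. \<Sum>q<n. \<xi> [p, q] * ?R p q a b) = 0"] by simp
  also have "\<dots> \<longleftrightarrow> \<xi> \<in> perp n (R_image n k \<eta> \<tau>)"
    by (rule perp_R_image_iff[symmetric])
  finally show ?thesis .
qed

theorem theorem7p4:
  fixes n k :: nat and \<eta> \<tau> :: complex
  assumes "1 \<le> k" and "k < n" and "coprime n k" and "Im \<eta> > 0"
  shows "graded_alg_iso n (perp n (R_image n k \<eta> \<tau>)) (R_kernel n (n - k) \<eta> \<tau>)"
proof (rule graded_alg_iso_relabel[where \<sigma> = "zn_neg n"])
  note iff = relabel_zn_neg_mem_R_kernel_iff[OF \<open>k < n\<close>]
  show "relabel (zn_neg n) ` perp n (R_image n k \<eta> \<tau>) \<subseteq> R_kernel n (n - k) \<eta> \<tau>"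
    by (auto simp: iff)
  show "relabel (zn_neg n) ` R_kernel n (n - k) \<eta> \<tau> \<subseteq> perp n (R_image n k \<eta> \<tau>)"
    by (auto simp: iff [symmetric] relabel_relabel)
qed simp_all

end
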